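(* Let $T$ be a tree with $ex(T)\ge1$ satisfying $\dim_{1,f}(T)=\dim_f(T)$. Then: (a) if $v\in M_2(T)$, then every terminal vertex of $v$ is adjacent to $v$ in $T$; (b) $T$ contains no major vertex of terminal degree one; (c) $T$ contains neither a major vertex of terminal degree zero nor an interior degree-two vertex.
   Context: $d(x,y)$ is the distance in the tree. For a function $g$ on $V(T)$ and $U\subseteq V(T)$, $g(U)=\sum_{s\in U}g(s)$. $R\{x,y\}=\{z: d(x,z)\ne d(y,z)\}$; $g:V(T)\to[0,1]$ is a resolving function if $g(R\{x,y\})\ge1$ for all distinct $x,y$; $\dim_f(T)$ is the minimum of $g(V(T))$ over resolving functions. $d_1(x,y)=\min\{d(x,y),2\}$, $R_1\{x,y\}=\{z: d_1(x,z)\neq d_1(y,z)\}$; $h:V(T)\to[0,1]$ is a $1$-truncated resolving function if $h(R_1\{x,y\})\ge 1$ for all distinct $x,y$, and $\dim_{1,f}(T)$ is the minimum of $h(V(T))$ over such $h$. A leaf has degree one; a major vertex has degree at least three. A leaf $\ell$ is a terminal vertex of a major vertex $v$ if $d(\ell,v)<d(\ell,w)$ for every other major vertex $w$; the terminal degree $ter(v)$ is the number of terminal vertices of $v$; an exterior major vertex is a major vertex with $ter(v)>0$. $M(T)$ is the set of exterior major vertices, $ex(T)=|M(T)|$, $M_2(T)=\{w\in M(T): ter(w)\ge2\}$. An interior degree-two vertex is a vertex of degree $2$ such that the shortest path from it to any terminal vertex includes a major vertex. *)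

theory Defs
  imports Complex_Main
begin

definition is_walk :: "('a \<Rightarrow> 'a \<Rightarrow> bool) \<Rightarrow> 'a list \<Rightarrow> bool" where
  "is_walk E xs \<longleftrightarrow> xs \<noteq> [] \<and> (\<forall>i. Suc i < length xs \<longrightarrow> E (xs ! i) (xs ! Suc i))"

definition is_tree :: "'a set \<Rightarrow> ('a \<Rightarrow> 'a \<Rightarrow> bool) \<Rightarrow> bool" where
  "is_tree V E \<longleftrightarrow> finite V \<and> V \<noteq> {}
     \<and> (\<forall>x y. E x y \<longrightarrow> x \<in> V \<and> y \<in> V)
     \<and> (\<forall>x y. E x y \<longrightarrow> E y x)
     \<and> (\<forall>x. \<not> E x x)
     \<and> (\<forall>x\<in>V. \<forall>y\<in>V. \<exists>xs. is_walk E xs \<and> hd xs = x \<and> last xs = y)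
     \<and> \<not> (\<exists>xs. is_walk E xs \<and> distinct xs \<and> length xs \<ge> 3 \<and> E (last xs) (hd xs))"

definition tdist :: "('a \<Rightarrow> 'a \<Rightarrow> bool) \<Rightarrow> 'a \<Rightarrow> 'a \<Rightarrow> nat" where
  "tdist E x y = (LEAST n. \<exists>xs. is_walk E xs \<and> hd xs = x \<and> last xs = y \<and> length xs = Suc n)"

definition tdeg :: "('a \<Rightarrow> 'a \<Rightarrow> bool) \<Rightarrow> 'a \<Rightarrow> nat" where
  "tdeg E x = card {y. E x y}"

definition is_leaf :: "'a set \<Rightarrow> ('a \<Rightarrow> 'a \<Rightarrow> bool) \<Rightarrow> 'a \<Rightarrow> bool" where
  "is_leaf V E x \<longleftrightarrow> x \<in> V \<and> tdeg E x = 1"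

definition is_major :: "'a set \<Rightarrow> ('a \<Rightarrow> 'a \<Rightarrow> bool) \<Rightarrow> 'a \<Rightarrow> bool" where
  "is_major V E x \<longleftrightarrow> x \<in> V \<and> tdeg E x \<ge> 3"

definition is_terminal :: "'a set \<Rightarrow> ('a \<Rightarrow> 'a \<Rightarrow> bool) \<Rightarrow> 'a \<Rightarrow> 'a \<Rightarrow> bool" where
  "is_terminal V E l v \<longleftrightarrow> is_leaf V E l \<and> is_major V E v
     \<and> (\<forall>w. is_major V E w \<and> w \<noteq> v \<longrightarrow> tdist E l v < tdist E l w)"

definition ter :: "'a set \<Rightarrow> ('a \<Rightarrow> 'a \<Rightarrow> bool) \<Rightarrow> 'a \<Rightarrow> nat" where
  "ter V E v = card {l. is_terminal V E l v}"

definition ext_major :: "'a set \<Rightarrow> ('a \<Rightarrow> 'a \<Rightarrow> bool) \<Rightarrow> 'a set" where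
  "ext_major V E = {v. is_major V E v \<and> ter V E v > 0}"

definition ex_num :: "'a set \<Rightarrow> ('a \<Rightarrow> 'a \<Rightarrow> bool) \<Rightarrow> nat" where
  "ex_num V E = card (ext_major V E)"

definition M2 :: "'a set \<Rightarrow> ('a \<Rightarrow> 'a \<Rightarrow> bool) \<Rightarrow> 'a set" where
  "M2 V E = {w \<in> ext_major V E. ter V E w \<ge> 2}"

definition interior_deg2 :: "'a set \<Rightarrow> ('a \<Rightarrow> 'a \<Rightarrow> bool) \<Rightarrow> 'a \<Rightarrow> bool" where
  "interior_deg2 V E u \<longleftrightarrow> u \<in> V \<and> tdeg E u = 2
     \<and> (\<forall>l v xs. is_terminal V E l v \<and> is_walk E xs \<and> hd xs = u \<and> last xs = l
            \<and> length xs = Suc (tdist E u l) \<longrightarrow> (\<exists>z\<in>set xs. is_major V E z))"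

definition resolving_set :: "('a \<Rightarrow> 'a \<Rightarrow> bool) \<Rightarrow> 'a set \<Rightarrow> 'a \<Rightarrow> 'a \<Rightarrow> 'a set" where
  "resolving_set E V x y = {z \<in> V. tdist E x z \<noteq> tdist E y z}"

definition resolving_fun :: "'a set \<Rightarrow> ('a \<Rightarrow> 'a \<Rightarrow> bool) \<Rightarrow> ('a \<Rightarrow> real) \<Rightarrow> bool" where
  "resolving_fun V E g \<longleftrightarrow> (\<forall>s\<in>V. 0 \<le> g s \<and> g s \<le> 1)
     \<and> (\<forall>x\<in>V. \<forall>y\<in>V. x \<noteq> y \<longrightarrow> sum g (resolving_set E V x y) \<ge> 1)"

definition frac_dim :: "'a set \<Rightarrow> ('a \<Rightarrow> 'a \<Rightarrow> bool) \<Rightarrow> real" where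
  "frac_dim V E = Inf {sum g V | g. resolving_fun V E g}"

definition tdist1 :: "('a \<Rightarrow> 'a \<Rightarrow> bool) \<Rightarrow> 'a \<Rightarrow> 'a \<Rightarrow> nat" where
  "tdist1 E x y = min (tdist E x y) 2"

definition resolving_set1 :: "('a \<Rightarrow> 'a \<Rightarrow> bool) \<Rightarrow> 'a set \<Rightarrow> 'a \<Rightarrow> 'a \<Rightarrow> 'a set" where
  "resolving_set1 E V x y = {z \<in> V. tdist1 E x z \<noteq> tdist1 E y z}"

definition resolving_fun1 :: "'a set \<Rightarrow> ('a \<Rightarrow> 'a \<Rightarrow> bool) \<Rightarrow> ('a \<Rightarrow> real) \<Rightarrow> bool" where
  "resolving_fun1 V E h \<longleftrightarrow> (\<forall>s\<in>V. 0 \<le> h s \<and> h s \<le> 1)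
     \<and> (\<forall>x\<in>V. \<forall>y\<in>V. x \<noteq> y \<longrightarrow> sum h (resolving_set1 E V x y) \<ge> 1)"

definition frac_dim1 :: "'a set \<Rightarrow> ('a \<Rightarrow> 'a \<Rightarrow> bool) \<Rightarrow> real" where
  "frac_dim1 V E = Inf {sum h V | h. resolving_fun1 V E h}"

end

theory Submission
  imports Defs
begin

text \<open>
  Call the neighbour of a leaf its support, and let \<open>L\<close> be the set of leaves. Weight \<open>1/2\<close>
  on every leaf is a resolving function, since for distinct \<open>x\<close>, \<open>y\<close> some leaf is closer to
  \<open>x\<close> and another one is closer to \<open>y\<close>; hence \<open>dim\<^sub>f(T) \<le> |L|/2\<close>. If a major vertex
  has exactly one adjacent leaf \<open>l\<^sub>0\<close> and no support has degree two, every pair is still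
  resolved by two leaves other than \<open>l\<^sub>0\<close>, and \<open>dim\<^sub>f(T) \<le> (|L| - 1)/2\<close>.

  Conversely, let \<open>h\<close> be a 1-truncated resolving function. Two leaves with a common support
  are resolved only by themselves, and leaves \<open>l\<close>, \<open>l'\<close> with distinct supports \<open>p\<close>, \<open>p'\<close>
  only by \<open>l\<close>, \<open>p\<close>, \<open>l'\<close>, \<open>p'\<close>. Grouping \<open>h(V)\<close> by supports, this gives
  \<open>h(V) \<ge> |L|/2\<close> as soon as there are two supports, with a surplus of at least \<open>1/6\<close> if
  some support has degree two and of at least \<open>1/4\<close> if some vertex is neither a leaf nor a
  support. So if the two dimensions agree, every support is a major vertex with at least two
  leaves and every vertex is a leaf or a support, which is the statement.
\<close>

section \<open>Walks\<close>

lemma successively_iff_nth: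
  "successively R xs \<longleftrightarrow> (\<forall>i. Suc i < length xs \<longrightarrow> R (xs ! i) (xs ! Suc i))"
proof (induction R xs rule: successively.induct)
  case (3 R x y xs)
  then show ?case by (auto simp: nth_Cons' less_Suc_eq_0_disj)
qed simp_all

lemma is_walk_iff_successively: "is_walk E xs \<longleftrightarrow> xs \<noteq> [] \<and> successively E xs"
  unfolding is_walk_def successively_iff_nth ..

lemma successively_shortcut:
  assumes "successively R xs" "xs \<noteq> []"
  obtains ys where "successively R ys" "distinct ys" "ys \<noteq> []" "hd ys = hd xs" "last ys = last xs"
  using assms
proof (induction "length xs" arbitrary: xs rule: less_induct)
  case less
  show ?case
  proof (cases "distinct xs")
    case False
    then obtain as y bs cs where xs: "xs = as @ [y] @ bs @ [y] @ cs"
      using not_distinct_decomp by blast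
    let ?zs = "as @ [y] @ cs"
    have "successively R (as @ [y])" "successively R (y # cs)"
      using less.prems(2) successively_append_iff[of R "as @ [y]" "bs @ y # cs"]
        successively_append_iff[of R "as @ y # bs" "y # cs"]
      unfolding xs by auto
    then have "successively R ?zs"
      by (auto simp: successively_append_iff)
    moreover have "hd ?zs = hd xs" "last ?zs = last xs"
      unfolding xs by (cases as; simp) (cases cs; simp)
    ultimately show ?thesis
      using less.hyps[of ?zs] less.prems(1) unfolding xs by fastforce
  qed (use less.prems in blast)
qed

lemma successively_join:
  assumes "successively R xs" "successively R ys" "xs \<noteq> []" "last xs = hd ys"
  shows "successively R (xs @ tl ys)"
  using assms by (cases ys) (auto simp: successively_append_iff successively_Cons)

section \<open>Distances in a tree\<close>

locale tree_graph =
  fixes V :: "'a set" and E :: "'a \<Rightarrow> 'a \<Rightarrow> bool"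
  assumes tree: "is_tree V E"
begin

lemma finite_V: "finite V"
  using tree unfolding is_tree_def by blast

lemma edge_in_V: "E x y \<Longrightarrow> x \<in> V \<and> y \<in> V"
  using tree unfolding is_tree_def by blast

lemma edge_sym: "E x y \<Longrightarrow> E y x"
  using tree unfolding is_tree_def by blast

lemma edge_irrefl: "\<not> E x x"
  using tree unfolding is_tree_def by blast

lemma connected: "x \<in> V \<Longrightarrow> y \<in> V \<Longrightarrow> \<exists>xs. is_walk E xs \<and> hd xs = x \<and> last xs = y"
  using tree unfolding is_tree_def by blast

lemma no_cycle: "is_walk E xs \<Longrightarrow> distinct xs \<Longrightarrow> length xs \<ge> 3 \<Longrightarrow> \<not> E (last xs) (hd xs)"
  using tree unfolding is_tree_def by blast

abbreviation d where "d \<equiv> tdist E"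

lemma walk_in_V: "is_walk E xs \<Longrightarrow> hd xs \<in> V \<Longrightarrow> set xs \<subseteq> V"
  unfolding is_walk_iff_successively
proof (induction xs)
  case (Cons x xs)
  then show ?case by (cases xs) (auto dest: edge_in_V)
qed simp

lemma walk_rev: "is_walk E xs \<Longrightarrow> is_walk E (rev xs)"
  unfolding is_walk_iff_successively by (auto intro: edge_sym elim: successively_mono)

lemma walk_join:
  assumes "is_walk E xs" "is_walk E ys" "last xs = hd ys"
  shows "is_walk E (xs @ tl ys)" "hd (xs @ tl ys) = hd xs" "last (xs @ tl ys) = last ys"
  using assms successively_join[of E xs ys] unfolding is_walk_iff_successively
  by (cases ys; simp)+

lemma dist_less_length:
  assumes "is_walk E xs" "hd xs = x" "last xs = y"
  shows "d x y < length xs"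
proof -
  have "length xs = Suc (length xs - 1)"
    using assms(1) unfolding is_walk_def by simp
  then have "d x y \<le> length xs - 1"
    unfolding tdist_def using assms by (metis (mono_tags, lifting) Least_le)
  then show ?thesis
    using \<open>length xs = Suc (length xs - 1)\<close> by linarith
qed

definition geodesic :: "'a \<Rightarrow> 'a \<Rightarrow> 'a list \<Rightarrow> bool" where
  "geodesic x y xs \<longleftrightarrow> is_walk E xs \<and> hd xs = x \<and> last xs = y \<and> length xs = Suc (d x y)"

lemma geodesic_exists:
  assumes "x \<in> V" "y \<in> V"
  obtains xs where "geodesic x y xs"
proof -
  obtain xs where xs: "is_walk E xs" "hd xs = x" "last xs = y"
    using connected assms by blast
  then have "\<exists>n xs. is_walk E xs \<and> hd xs = x \<and> last xs = y \<and> length xs = Suc n"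
    unfolding is_walk_def by (metis Suc_pred length_greater_0_conv)
  then have "\<exists>xs. geodesic x y xs"
    unfolding geodesic_def tdist_def by (rule LeastI_ex)
  then show ?thesis
    using that by blast
qed

lemma dist_self [simp]: "d x x = 0"
  using dist_less_length[of "[x]"] by (simp add: is_walk_def)

lemma dist_eq_0_iff:
  assumes "x \<in> V" "y \<in> V"
  shows "d x y = 0 \<longleftrightarrow> x = y"
proof
  assume "d x y = 0"
  moreover obtain xs where "geodesic x y xs"
    using geodesic_exists assms .
  ultimately show "x = y"
    unfolding geodesic_def by (auto simp: length_Suc_conv)
qed simp

lemma dist_edge: "E x y \<Longrightarrow> d x y = 1"
proof -
  assume xy: "E x y"
  then have "is_walk E [x, y]"
    unfolding is_walk_def by (auto simp: less_Suc_eq)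
  then have "d x y \<le> 1"
    using dist_less_length[of "[x, y]" x y] by simp
  moreover have "x \<noteq> y"
    using xy edge_irrefl by blast
  ultimately show ?thesis
    using dist_eq_0_iff edge_in_V[OF xy] by fastforce
qed

lemma dist_eq_1_iff:
  assumes "x \<in> V" "y \<in> V"
  shows "d x y = 1 \<longleftrightarrow> E x y"
proof
  assume "d x y = 1"
  moreover obtain xs where "geodesic x y xs"
    using geodesic_exists assms .
  ultimately show "E x y"
    unfolding geodesic_def is_walk_def by (auto simp: length_Suc_conv)
qed (rule dist_edge)

lemma dist_sym:
  assumes "x \<in> V" "y \<in> V"
  shows "d x y = d y x"
proof -
  have "d b a \<le> d a b" if ab: "a \<in> V" "b \<in> V" for a b
  proof -
    obtain xs where "geodesic a b xs"
      using geodesic_exists ab .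
    then show ?thesis
      using dist_less_length[of "rev xs" b a] walk_rev
      unfolding geodesic_def is_walk_def by (simp add: hd_rev last_rev)
  qed
  then show ?thesis
    using assms by (simp add: order_antisym)
qed

lemma dist_triangle:
  assumes "x \<in> V" "y \<in> V" "z \<in> V"
  shows "d x z \<le> d x y + d y z"
proof -
  obtain xs ys where "geodesic x y xs" "geodesic y z ys"
    using geodesic_exists assms by metis
  then show ?thesis
    using dist_less_length[of "xs @ tl ys" x z] walk_join[of xs ys]
    unfolding geodesic_def by simp
qed

lemma dist_edge_le: "E y w \<Longrightarrow> x \<in> V \<Longrightarrow> d x w \<le> d x y + 1"
  using dist_triangle[of x y w] dist_edge[of y w] edge_in_V by fastforce

lemma geodesic_nth:
  assumes "geodesic x y xs" "x \<in> V" "y \<in> V" "i \<le> d x y"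
  shows "d x (xs ! i) = i"
proof -
  have xs: "is_walk E xs" "hd xs = x" "last xs = y" "length xs = Suc (d x y)"
    using assms(1) unfolding geodesic_def by auto
  have "xs ! i \<in> V"
    using walk_in_V[OF xs(1)] xs(2,4) assms(2,4) by (simp add: subset_iff)
  have "is_walk E (take (Suc i) xs)"
    using xs(1,4) assms(4) unfolding is_walk_def by auto
  moreover have "hd (take (Suc i) xs) = x"
    using xs(2,4) by (cases xs) auto
  moreover have "last (take (Suc i) xs) = xs ! i"
    using xs(4) assms(4) by (simp add: take_Suc_conv_app_nth)
  ultimately have "d x (xs ! i) < length (take (Suc i) xs)"
    by (rule dist_less_length)
  moreover have "is_walk E (drop i xs)" "hd (drop i xs) = xs ! i" "last (drop i xs) = y"
    using xs assms(4) unfolding is_walk_def by (auto simp: hd_drop_conv_nth)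
  then have "d (xs ! i) y < length (drop i xs)"
    by (rule dist_less_length)
  moreover have "d x y \<le> d x (xs ! i) + d (xs ! i) y"
    using dist_triangle assms(2,3) \<open>xs ! i \<in> V\<close> by blast
  ultimately show ?thesis
    using xs(4) assms(4) by auto
qed

lemma geodesic_set_dist:
  assumes "geodesic x y xs" "x \<in> V" "y \<in> V" "z \<in> set xs"
  shows "d x z \<le> d x y" and "d x z = d x y \<Longrightarrow> z = y"
proof -
  obtain i where i: "i < length xs" "z = xs ! i"
    using assms(4) by (metis in_set_conv_nth)
  have len: "length xs = Suc (d x y)" and y: "last xs = y"
    using assms(1) unfolding geodesic_def by auto
  have "d x z = i"
    using geodesic_nth[OF assms(1-3)] i len by simp
  then show "d x z \<le> d x y"
    using i len by simp
  show "z = y" if "d x z = d x y"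
  proof -
    have "i = length xs - 1"
      using that \<open>d x z = i\<close> len by simp
    moreover have "xs \<noteq> []"
      using len by auto
    ultimately show ?thesis
      using i y by (simp add: last_conv_nth)
  qed
qed

text \<open>Every walk between neighbours \<open>a\<close>, \<open>b\<close> traverses their edge: its shortcut is a path
  from \<open>a\<close> to \<open>b\<close>, and in a tree the only one is \<open>[a, b]\<close>. The relation \<open>R\<close> singles out
  the steps that are allowed.\<close>

lemma successively_between_neighbours:
  assumes "E a b" "successively R xs" "xs \<noteq> []" "hd xs = a" "last xs = b"
    and "\<And>u v. R u v \<Longrightarrow> E u v"
  shows "R a b"
proof -
  obtain ys where ys: "successively R ys" "distinct ys" "ys \<noteq> []" "hd ys = a" "last ys = b"
    using successively_shortcut[OF assms(2,3)] assms(4,5) by metis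
  have walk: "is_walk E ys"
    using ys(1,3) assms(6) unfolding is_walk_iff_successively by (auto elim: successively_mono)
  have "a \<noteq> b"
    using assms(1) edge_irrefl by blast
  then have "length ys \<ge> 2"
    using ys(3-5) by (cases ys rule: remdups_adj.cases) auto
  moreover have "\<not> length ys \<ge> 3"
    using no_cycle[OF walk ys(2)] ys(4,5) edge_sym[OF assms(1)] by auto
  ultimately have "length ys = 2"
    by linarith
  then obtain u v where "ys = [u, v]"
    by (auto simp: numeral_2_eq_2 length_Suc_conv)
  then have "ys = [a, b]"
    using ys(4,5) by simp
  then show ?thesis
    using ys(1) by simp
qed

lemma dist_neighbours_differ:
  assumes "x \<in> V" "E z w"
  shows "d x z \<noteq> d x w"
proof
  assume eq: "d x z = d x w"
  have zw: "z \<in> V" "w \<in> V" "z \<noteq> w"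
    using assms(2) edge_in_V edge_irrefl by blast+
  obtain P Q where P: "geodesic x z P" and Q: "geodesic x w Q"
    using geodesic_exists assms(1) zw by metis
  have "w \<notin> set P" "z \<notin> set Q"
    using geodesic_set_dist(2)[OF P assms(1) zw(1), of w] geodesic_set_dist(2)[OF Q assms(1) zw(2), of z]
      eq zw(3) by auto
  have walks: "is_walk E (rev P)" "is_walk E Q" "last (rev P) = hd Q"
    using P Q walk_rev unfolding geodesic_def by (auto simp: last_rev)
  define R where "R u v \<longleftrightarrow> E u v \<and> ({u, v} \<subseteq> set P \<or> {u, v} \<subseteq> set Q)" for u v
  have "successively R (rev P)"
    using walks(1) unfolding is_walk_iff_successively successively_rev
    by (auto simp: R_def elim!: successively_mono)
  moreover have "successively R Q"
    using walks(2) unfolding is_walk_iff_successively by (auto simp: R_def elim!: successively_mono)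
  ultimately have "successively R (rev P @ tl Q)"
    using walks(1,3) unfolding is_walk_def by (intro successively_join) auto
  moreover have "hd (rev P @ tl Q) = z" "last (rev P @ tl Q) = w"
    using walk_join[OF walks] P Q unfolding geodesic_def by (simp_all add: hd_rev)
  ultimately have "R z w"
    using walk_join(1)[OF walks]
    by (intro successively_between_neighbours[OF assms(2), of R "rev P @ tl Q"])
      (auto simp: R_def is_walk_def)
  then show False
    using \<open>w \<notin> set P\<close> \<open>z \<notin> set Q\<close> by (simp add: R_def)
qed

lemma closer_neighbour_unique:
  assumes "x \<in> V" "E z w1" "E z w2" "d x w1 < d x z" "d x w2 < d x z"
  shows "w1 = w2"
proof (rule ccontr)
  assume "w1 \<noteq> w2"
  have V: "w1 \<in> V" "w2 \<in> V"
    using assms(2,3) edge_in_V by blast+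
  obtain P1 P2 where P1: "geodesic x w1 P1" and P2: "geodesic x w2 P2"
    using geodesic_exists assms(1) V by metis
  have "z \<notin> set P1" "z \<notin> set P2"
    using geodesic_set_dist(1)[OF P1 assms(1) V(1), of z] geodesic_set_dist(1)[OF P2 assms(1) V(2), of z]
      assms(4,5) by auto
  have walks: "is_walk E (rev P1)" "is_walk E P2" "last (rev P1) = hd P2"
    using P1 P2 walk_rev unfolding geodesic_def by (auto simp: last_rev)
  define R where "R u v \<longleftrightarrow> E u v \<and> (u = z \<longrightarrow> v = w1)" for u v
  have "successively R (rev P1)"
    using walks(1) \<open>z \<notin> set P1\<close> unfolding is_walk_iff_successively
    by (auto simp: R_def elim!: successively_mono)
  moreover have "successively R P2"
    using walks(2) \<open>z \<notin> set P2\<close> unfolding is_walk_iff_successively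
    by (auto simp: R_def elim!: successively_mono)
  ultimately have "successively R (rev P1 @ tl P2)"
    using walks(1,3) unfolding is_walk_def by (intro successively_join) auto
  moreover have "hd (rev P1 @ tl P2) = w1" "last (rev P1 @ tl P2) = w2" "rev P1 @ tl P2 \<noteq> []"
    using walk_join[OF walks] P1 P2 unfolding geodesic_def is_walk_def by (simp_all add: hd_rev)
  ultimately have "successively R (z # rev P1 @ tl P2)"
    using assms(2) by (simp add: successively_Cons R_def)
  then have "R z w2"
    using \<open>last (rev P1 @ tl P2) = w2\<close> \<open>rev P1 @ tl P2 \<noteq> []\<close>
    by (intro successively_between_neighbours[OF assms(3), of R "z # rev P1 @ tl P2"])
      (auto simp: R_def)
  then show False
    using \<open>w1 \<noteq> w2\<close> by (simp add: R_def)
qed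

lemma dist_neighbour_cases:
  assumes "x \<in> V" "E z w"
  shows "d x w = d x z + 1 \<or> d x z = d x w + 1"
  using dist_neighbours_differ[OF assms] dist_edge_le[OF assms(2,1)]
    dist_edge_le[OF edge_sym[OF assms(2)] assms(1)] by linarith

lemma closer_neighbour_exists:
  assumes "x \<in> V" "z \<in> V" "z \<noteq> x"
  obtains w where "E z w" "d x w + 1 = d x z"
proof -
  obtain P where P: "geodesic x z P"
    using geodesic_exists assms(1,2) .
  define k where "k = d x z - 1"
  have k: "d x z = Suc k"
    using dist_eq_0_iff[OF assms(1,2)] assms(3) unfolding k_def by simp
  then have "E (P ! k) (P ! Suc k)" "P ! Suc k = z"
    using P unfolding geodesic_def is_walk_def by (auto simp: last_conv_nth)
  moreover have "d x (P ! k) = k"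
    using geodesic_nth[OF P assms(1,2), of k] k by simp
  ultimately show ?thesis
    using that edge_sym k by auto
qed

definition neighbours :: "'a \<Rightarrow> 'a set" where
  "neighbours x = {y. E x y}"

lemma neighbours_subset_V: "neighbours x \<subseteq> V"
  unfolding neighbours_def using edge_in_V by auto

lemma finite_neighbours: "finite (neighbours x)"
  using neighbours_subset_V finite_V finite_subset by blast

lemma tdeg_eq_card_neighbours: "tdeg E x = card (neighbours x)"
  unfolding tdeg_def neighbours_def ..

definition leaves :: "'a set" where
  "leaves = {l \<in> V. tdeg E l = 1}"

lemma finite_leaves: "finite leaves"
  unfolding leaves_def using finite_V by simp

lemma leaves_subset_V: "leaves \<subseteq> V"
  unfolding leaves_def by auto

lemma leaf_neighbours:
  assumes "l \<in> leaves" "E l p"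
  shows "neighbours l = {p}"
proof -
  obtain c where "neighbours l = {c}"
    using assms(1) unfolding leaves_def tdeg_eq_card_neighbours by (auto simp: card_1_singleton_iff)
  moreover have "p \<in> neighbours l"
    using assms(2) by (simp add: neighbours_def)
  ultimately show ?thesis
    by simp
qed

lemma dist_to_leaf:
  assumes "l \<in> leaves" "E l p" "z \<in> V" "z \<noteq> l"
  shows "d z l = d z p + 1"
proof -
  obtain w where "E l w" "d z w + 1 = d z l"
    using closer_neighbour_exists[OF assms(3) _ assms(4)[symmetric]] assms(1) leaves_subset_V by blast
  moreover have "w = p"
    using leaf_neighbours[OF assms(1,2)] \<open>E l w\<close> unfolding neighbours_def by blast
  ultimately show ?thesis
    by simp
qed

lemma closed_set_contains_V:
  assumes "x0 \<in> X" "x0 \<in> V" and closed: "\<And>a b. a \<in> X \<Longrightarrow> E a b \<Longrightarrow> b \<in> X"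
  shows "V \<subseteq> X"
proof
  fix z assume "z \<in> V"
  then obtain xs where xs: "is_walk E xs" "hd xs = x0" "last xs = z"
    using connected assms(2) by blast
  have "set ys \<subseteq> X" if "successively E ys" "hd ys \<in> X" for ys
    using that
  proof (induction ys)
    case (Cons y ys)
    then have "ys \<noteq> [] \<Longrightarrow> hd ys \<in> X"
      using closed by (auto simp: successively_Cons)
    with Cons show ?case
      by (cases ys) (auto simp: successively_Cons)
  qed simp
  then have "set xs \<subseteq> X"
    using xs assms(1) unfolding is_walk_iff_successively by auto
  then show "z \<in> X"
    using xs(1,3) unfolding is_walk_def by auto
qed

lemma resolving_set1_subset:
  assumes "x \<in> V" "y \<in> V"
  shows "resolving_set1 E V x y \<subseteq> insert x (neighbours x) \<union> insert y (neighbours y)"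
proof
  fix z assume z: "z \<in> resolving_set1 E V x y"
  then have "z \<in> V" "min (d x z) 2 \<noteq> min (d y z) 2"
    unfolding resolving_set1_def tdist1_def by auto
  then have "z \<in> V" "d x z \<le> 1 \<or> d y z \<le> 1"
    by linarith+
  then show "z \<in> insert x (neighbours x) \<union> insert y (neighbours y)"
    using assms dist_eq_0_iff dist_eq_1_iff unfolding neighbours_def
    by (metis UnI1 UnI2 insertI1 insertI2 le_neq_implies_less less_one mem_Collect_eq)
qed

lemma le_frac_dim1:
  assumes "\<And>h. resolving_fun1 V E h \<Longrightarrow> c \<le> sum h V"
  shows "c \<le> frac_dim1 V E"
proof -
  have "x \<in> resolving_set1 E V x y" if "x \<in> V" "y \<in> V" "x \<noteq> y" for x y
    using that dist_eq_0_iff[of y x] unfolding resolving_set1_def tdist1_def by auto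
  then have "resolving_fun1 V E (\<lambda>_. 1)"
    unfolding resolving_fun1_def using finite_V
    by (auto simp: Suc_le_eq card_gt_0_iff resolving_set1_def)
  then show ?thesis
    unfolding frac_dim1_def using assms by (intro cInf_greatest) auto
qed

lemma frac_dim_le_half_card:
  assumes "L \<subseteq> V"
    and two: "\<And>x y. x \<in> V \<Longrightarrow> y \<in> V \<Longrightarrow> x \<noteq> y \<Longrightarrow>
      \<exists>a\<in>L. \<exists>b\<in>L. a \<noteq> b \<and> d x a \<noteq> d y a \<and> d x b \<noteq> d y b"
  shows "frac_dim V E \<le> card L / 2"
proof -
  define g where "g s = (if s \<in> L then 1/2 else 0 :: real)" for s
  have "1 \<le> sum g (resolving_set E V x y)" if xy: "x \<in> V" "y \<in> V" "x \<noteq> y" for x y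
  proof -
    obtain a b where ab: "a \<in> L" "b \<in> L" "a \<noteq> b" "d x a \<noteq> d y a" "d x b \<noteq> d y b"
      using two[OF xy] by blast
    then have "1 = sum g {a, b}"
      by (simp add: g_def)
    also have "\<dots> \<le> sum g (resolving_set E V x y)"
      using ab assms(1) finite_V unfolding resolving_set_def by (intro sum_mono2) (auto simp: g_def)
    finally show ?thesis .
  qed
  then have "resolving_fun V E g"
    unfolding resolving_fun_def by (auto simp: g_def)
  moreover have "bdd_below {sum g V |g. resolving_fun V E g}"
    unfolding resolving_fun_def by (intro bdd_belowI[of _ 0]) (auto intro: sum_nonneg)
  ultimately have "frac_dim V E \<le> sum g V"
    unfolding frac_dim_def by (auto intro: cInf_lower)
  also have "sum g V = card L / 2"
    using assms(1) finite_V by (simp add: g_def sum.If_cases Int_absorb1)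
  finally show ?thesis .
qed

end

section \<open>Leaves and their supports\<close>

locale tree_with_major = tree_graph +
  assumes has_major: "\<exists>v. is_major V E v"
begin

lemma neighbours_nonempty:
  assumes "z \<in> V"
  shows "neighbours z \<noteq> {}"
proof -
  obtain v where v: "v \<in> V" "card (neighbours v) \<ge> 3"
    using has_major unfolding is_major_def tdeg_eq_card_neighbours by blast
  show ?thesis
  proof (cases "z = v")
    case False
    then obtain w where "E z w"
      using closer_neighbour_exists[OF v(1) assms] by blast
    then show ?thesis
      unfolding neighbours_def by blast
  qed (use v(2) in auto)
qed

lemma leaf_if_card_neighbours_le_1: "z \<in> V \<Longrightarrow> card (neighbours z) \<le> 1 \<Longrightarrow> z \<in> leaves"
  using neighbours_nonempty[of z] finite_neighbours[of z]
  unfolding leaves_def tdeg_eq_card_neighbours by (simp add: le_Suc_eq)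

text \<open>Among the vertices outside \<open>X\<close> that are closer to \<open>x\<close> than to \<open>y\<close>, one farthest from
  \<open>y\<close> has all its neighbours outside \<open>X\<close> closer to \<open>y\<close>, and there is at most one such
  neighbour.\<close>

lemma farthest_on_side:
  assumes "x \<in> V" "y \<in> V" "z0 \<in> V" "d x z0 < d y z0" "z0 \<notin> X"
  obtains z where "z \<in> V" "d x z < d y z" "z \<notin> X" "card (neighbours z - X) \<le> 1"
proof -
  define A where "A = {z \<in> V. d x z < d y z \<and> z \<notin> X}"
  have "finite A" "z0 \<in> A"
    unfolding A_def using finite_V assms(3-5) by auto
  then have "Max (d y ` A) \<in> d y ` A"
    by (intro Max_in) auto
  then obtain z where z: "z \<in> A" "d y z = Max (d y ` A)"
    by auto
  have zmax: "d y a \<le> d y z" if "a \<in> A" for a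
    using \<open>finite A\<close> that z(2) by simp
  have closer: "d y w < d y z" if w: "w \<in> neighbours z - X" for w
  proof (rule ccontr)
    assume "\<not> d y w < d y z"
    moreover have e: "E z w"
      using w unfolding neighbours_def by simp
    ultimately have "d y w = d y z + 1"
      using dist_neighbour_cases[OF assms(2)] by fastforce
    moreover have "d x w \<le> d x z + 1"
      using dist_edge_le[OF e assms(1)] .
    ultimately have "w \<in> A"
      using z(1) w e edge_in_V unfolding A_def by auto
    then show False
      using zmax \<open>d y w = d y z + 1\<close> by fastforce
  qed
  have "\<forall>a\<in>neighbours z - X. \<forall>b\<in>neighbours z - X. a = b"
    using closer_neighbour_unique[OF assms(2) _ _ closer closer] unfolding neighbours_def by blast
  then have "card (neighbours z - X) \<le> 1"
    by (simp add: card_le_Suc0_iff_eq finite_neighbours)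
  then show ?thesis
    using that z(1) unfolding A_def by blast
qed

lemma leaf_on_side:
  assumes "x \<in> V" "y \<in> V" "x \<noteq> y"
  obtains l where "l \<in> leaves" "d x l < d y l"
proof -
  have "d x x < d y x"
    using dist_eq_0_iff[OF assms(2,1)] assms(3) by simp
  then obtain z where "z \<in> V" "d x z < d y z" "card (neighbours z - {}) \<le> 1"
    using farthest_on_side[OF assms(1,2,1)] by blast
  then show ?thesis
    using that leaf_if_card_neighbours_le_1 by auto
qed

definition support :: "'a \<Rightarrow> 'a" where
  "support l = (THE p. E l p)"

lemma leaf_edge_iff:
  assumes "l \<in> leaves"
  shows "E l p \<longleftrightarrow> p = support l"
proof -
  obtain c where "neighbours l = {c}"
    using assms unfolding leaves_def tdeg_eq_card_neighbours by (auto simp: card_1_singleton_iff)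
  then have "\<And>p. E l p \<longleftrightarrow> p = c"
    unfolding neighbours_def by auto
  moreover have "support l = c"
    unfolding support_def using calculation by (intro the_equality) auto
  ultimately show ?thesis
    by simp
qed

lemma support_edge: "l \<in> leaves \<Longrightarrow> E l (support l)"
  using leaf_edge_iff by blast

lemma no_closed_set_of_small_degree:
  assumes "x0 \<in> X" "x0 \<in> V" "\<And>a b. a \<in> X \<Longrightarrow> E a b \<Longrightarrow> b \<in> X"
    and "\<And>a. a \<in> X \<Longrightarrow> tdeg E a \<le> 2"
  shows False
proof -
  obtain v where "is_major V E v"
    using has_major by blast
  then show False
    using closed_set_contains_V[OF assms(1-3)] assms(4) unfolding is_major_def by force
qed

lemma support_not_leaf:
  assumes "l \<in> leaves"
  shows "support l \<notin> leaves"
proof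
  assume p: "support l \<in> leaves"
  have "l = support (support l)"
    using leaf_edge_iff[OF p] edge_sym[OF support_edge[OF assms]] by blast
  then have "E a b \<Longrightarrow> b \<in> {l, support l}" if "a \<in> {l, support l}" for a b
    using that leaf_edge_iff[OF assms] leaf_edge_iff[OF p] by auto
  moreover have "tdeg E a \<le> 2" if "a \<in> {l, support l}" for a
    using that assms p unfolding leaves_def by auto
  ultimately show False
    using no_closed_set_of_small_degree[of l "{l, support l}"] assms leaves_subset_V by blast
qed

lemma card_leaves_ge_3: "card leaves \<ge> 3"
proof -
  obtain v where v: "v \<in> V" "card (neighbours v) \<ge> 3"
    using has_major unfolding is_major_def tdeg_eq_card_neighbours by blast
  have "\<exists>l\<in>leaves. d l u < d l v" if u: "u \<in> neighbours v" for u
  proof -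
    have "u \<in> V" "u \<noteq> v"
      using u neighbours_subset_V edge_irrefl unfolding neighbours_def by blast+
    then obtain l where "l \<in> leaves" "d u l < d v l"
      using leaf_on_side v(1) by metis
    then show ?thesis
      using dist_sym \<open>u \<in> V\<close> v(1) leaves_subset_V by (metis subsetD)
  qed
  then obtain f where f: "\<And>u. u \<in> neighbours v \<Longrightarrow> f u \<in> leaves \<and> d (f u) u < d (f u) v"
    by metis
  have "inj_on f (neighbours v)"
  proof (rule inj_onI)
    fix u u' assume u: "u \<in> neighbours v" "u' \<in> neighbours v" "f u = f u'"
    then have "f u \<in> V" "E v u" "E v u'"
      using f leaves_subset_V unfolding neighbours_def by auto
    then show "u = u'"
      using closer_neighbour_unique[of "f u" v u u'] f u by metis
  qed
  then have "card (neighbours v) \<le> card leaves"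
    using f finite_leaves by (intro card_inj_on_le) auto
  then show ?thesis
    using v(2) by simp
qed

definition supports :: "'a set" where
  "supports = support ` leaves"

definition leaves_at :: "'a \<Rightarrow> 'a set" where
  "leaves_at p = {l \<in> leaves. E p l}"

definition inner_vertices :: "'a set" where
  "inner_vertices = V - leaves - supports"

lemma leaves_at_iff: "l \<in> leaves_at p \<longleftrightarrow> l \<in> leaves \<and> support l = p"
  unfolding leaves_at_def using leaf_edge_iff[of l p] edge_sym[of p l] edge_sym[of l p] by auto

lemma inner_vertices_subset_V: "inner_vertices \<subseteq> V"
  unfolding inner_vertices_def by blast

lemma supports_subset_V: "supports \<subseteq> V"
  unfolding supports_def using support_edge edge_in_V by blast

lemma finite_supports: "finite supports"
  unfolding supports_def using finite_leaves by simp

lemma supports_not_leaves: "p \<in> supports \<Longrightarrow> p \<notin> leaves"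
  unfolding supports_def using support_not_leaf by blast

lemma finite_leaves_at: "finite (leaves_at p)"
  unfolding leaves_at_def using finite_leaves by simp

lemma leaves_at_nonempty: "p \<in> supports \<Longrightarrow> leaves_at p \<noteq> {}"
  by (auto simp: supports_def leaves_at_iff)

lemma leaves_eq_UN_leaves_at: "leaves = (\<Union>p\<in>supports. leaves_at p)"
  by (auto simp: supports_def leaves_at_iff)

lemma disjoint_leaves_at: "p \<noteq> q \<Longrightarrow> leaves_at p \<inter> leaves_at q = {}"
  by (auto simp: leaves_at_iff)

lemma inner_vertex_closed_neighbourhood:
  assumes "w \<in> inner_vertices"
  shows "insert w (neighbours w) \<subseteq> inner_vertices \<union> supports"
proof -
  have "u \<notin> leaves" if "E w u" for u
    using that assms leaf_edge_iff[of u w] edge_sym[of w u] unfolding supports_def inner_vertices_def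
    by blast
  then show ?thesis
    using assms neighbours_subset_V unfolding inner_vertices_def neighbours_def by auto
qed

lemma card_leaves_eq_sum: "card leaves = (\<Sum>p\<in>supports. card (leaves_at p))"
  unfolding leaves_eq_UN_leaves_at
  by (rule card_UN_disjoint) (use finite_supports finite_leaves_at disjoint_leaves_at in auto)

section \<open>Upper bounds for the fractional metric dimension\<close>

lemma frac_dim_le_half_leaves: "frac_dim V E \<le> card leaves / 2"
proof (rule frac_dim_le_half_card[OF leaves_subset_V])
  fix x y assume xy: "x \<in> V" "y \<in> V" "x \<noteq> y"
  obtain a where "a \<in> leaves" "d x a < d y a"
    using leaf_on_side xy by blast
  moreover obtain b where "b \<in> leaves" "d y b < d x b"
    using leaf_on_side xy by metis
  ultimately show "\<exists>a\<in>leaves. \<exists>b\<in>leaves. a \<noteq> b \<and> d x a \<noteq> d y a \<and> d x b \<noteq> d y b"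
    by force
qed

context
  fixes v l0
  assumes major_v: "is_major V E v" and lonely: "leaves_at v = {l0}"
begin

lemma lonely_leaf: "l0 \<in> leaves" "support l0 = v"
  using lonely leaves_at_iff by blast+

lemma lonely_leaf_in_V: "l0 \<in> V"
  using lonely_leaf(1) leaves_subset_V by blast

lemma card_neighbours_lonely_major: "card (neighbours v - {l0}) \<ge> 2"
  using major_v finite_neighbours[of v]
  unfolding is_major_def tdeg_eq_card_neighbours by (auto simp: card_Diff_singleton_if)

lemma edge_lonely_leaf_iff: "E z l0 \<longleftrightarrow> z = v"
  using leaf_edge_iff[OF lonely_leaf(1)] lonely_leaf(2) edge_sym by metis

lemma leaf_on_side_avoiding:
  assumes "x \<in> V" "y \<in> V" "x \<noteq> y" "x \<noteq> l0"
  obtains a where "a \<in> leaves - {l0}" "d x a < d y a"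
proof -
  have "d x x < d y x"
    using dist_eq_0_iff[OF assms(2,1)] assms(3) by simp
  then obtain z where z: "z \<in> V" "d x z < d y z" "z \<noteq> l0" "card (neighbours z - {l0}) \<le> 1"
    using farthest_on_side[OF assms(1,2,1), of "{l0}"] assms(4) by blast
  have "z \<noteq> v"
    using z(4) card_neighbours_lonely_major by auto
  then have "neighbours z - {l0} = neighbours z"
    using edge_lonely_leaf_iff unfolding neighbours_def by auto
  then have "z \<in> leaves"
    using leaf_if_card_neighbours_le_1 z(1,4) by simp
  then show ?thesis
    using that z(2,3) by blast
qed

lemma vertex_closer_than_lonely_leaf_avoiding:
  assumes "y \<in> V" "y \<noteq> l0" "b \<in> leaves" "b \<noteq> l0"
  obtains z where "z \<in> V" "d y z < d l0 z" "z \<notin> {l0, b}"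
proof (cases "y = b")
  case False
  moreover have "d y y < d l0 y"
    using dist_eq_0_iff[OF lonely_leaf_in_V assms(1)] assms(2) by simp
  ultimately show ?thesis
    using that assms(1,2) by blast
next
  case True
  define p where "p = support y"
  have p: "E y p" "p \<in> V" "p \<notin> leaves"
    unfolding p_def using support_edge support_not_leaf True assms(3) edge_in_V by blast+
  have "p \<noteq> v"
    using True assms(3,4) lonely leaves_at_iff p_def by blast
  moreover have "E l0 v" "p \<noteq> l0" "v \<in> V"
    using edge_lonely_leaf_iff edge_sym p(3) lonely_leaf(1) major_v unfolding is_major_def by blast+
  ultimately have "d p l0 = d p v + 1" "d p v \<noteq> 0"
    using dist_to_leaf[OF lonely_leaf(1) _ p(2)] dist_eq_0_iff[OF p(2)] by auto
  then have "d y p < d l0 p"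
    using dist_edge[OF p(1)] dist_sym[OF p(2) lonely_leaf_in_V] by simp
  then show ?thesis
    using that p(2,3) assms(3) lonely_leaf(1) by blast
qed

lemma leaf_if_card_neighbours_minus_le_1:
  assumes no_deg2: "\<And>l. l \<in> leaves \<Longrightarrow> tdeg E (support l) \<noteq> 2"
    and a: "a \<in> leaves" "a \<noteq> l0" and z: "z \<in> V" "card (neighbours z - {l0, a}) \<le> 1"
  shows "z \<in> leaves"
proof -
  have "z \<noteq> v"
  proof
    assume "z = v"
    moreover have "a \<notin> neighbours v"
      using a lonely unfolding leaves_at_def neighbours_def by auto
    ultimately have "neighbours z - {l0, a} = neighbours v - {l0}"
      by auto
    then show False
      using z(2) card_neighbours_lonely_major by simp
  qed
  then have "l0 \<notin> neighbours z"
    using edge_lonely_leaf_iff unfolding neighbours_def by simp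
  have "card (neighbours z) \<le> 1"
  proof (cases "a \<in> neighbours z")
    case True
    then have "z = support a"
      using leaf_edge_iff[OF a(1), of z] edge_sym[of z a] unfolding neighbours_def by blast
    then have "card (neighbours z) \<noteq> 2"
      using no_deg2 a(1) tdeg_eq_card_neighbours by auto
    moreover have "neighbours z - {l0, a} = neighbours z - {a}"
      using \<open>l0 \<notin> neighbours z\<close> by auto
    then have "card (neighbours z) \<le> 2"
      using z(2) True finite_neighbours[of z] by (simp add: card_Diff_singleton)
    ultimately show ?thesis
      by linarith
  next
    case False
    then have "neighbours z - {l0, a} = neighbours z"
      using \<open>l0 \<notin> neighbours z\<close> by auto
    then show ?thesis
      using z(2) by simp
  qed
  then show ?thesis
    using leaf_if_card_neighbours_le_1 z(1) by blast
qed

lemma two_leaves_closer_than_lonely_leaf: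
  assumes no_deg2: "\<And>l. l \<in> leaves \<Longrightarrow> tdeg E (support l) \<noteq> 2"
    and "y \<in> V" "y \<noteq> l0"
  obtains a b where "a \<in> leaves - {l0}" "b \<in> leaves - {l0}" "a \<noteq> b"
    "d y a < d l0 a" "d y b < d l0 b"
proof -
  obtain a where a: "a \<in> leaves - {l0}" "d y a < d l0 a"
    using leaf_on_side_avoiding[OF assms(2) lonely_leaf_in_V assms(3) assms(3)] .
  have a': "a \<in> leaves" "a \<noteq> l0"
    using a(1) by auto
  then obtain z0 where z0: "z0 \<in> V" "d y z0 < d l0 z0" "z0 \<notin> {l0, a}"
    using vertex_closer_than_lonely_leaf_avoiding[OF assms(2,3)] by metis
  obtain z where z: "z \<in> V" "d y z < d l0 z" "z \<notin> {l0, a}" "card (neighbours z - {l0, a}) \<le> 1"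
    using farthest_on_side[OF assms(2) lonely_leaf_in_V z0] .
  have "z \<in> leaves"
    using leaf_if_card_neighbours_minus_le_1[OF no_deg2 a' z(1,4)] .
  then show ?thesis
    using that a z(2,3) by blast
qed

lemma lonely_leaf_complement_resolves:
  assumes no_deg2: "\<And>l. l \<in> leaves \<Longrightarrow> tdeg E (support l) \<noteq> 2"
    and xy: "x \<in> V" "y \<in> V" "x \<noteq> y"
  shows "\<exists>a\<in>leaves - {l0}. \<exists>b\<in>leaves - {l0}. a \<noteq> b \<and> d x a \<noteq> d y a \<and> d x b \<noteq> d y b"
proof -
  consider "x = l0" | "y = l0" | "x \<noteq> l0" "y \<noteq> l0"
    by blast
  then show ?thesis
  proof cases
    case 1
    obtain a b where "a \<in> leaves - {l0}" "b \<in> leaves - {l0}" "a \<noteq> b"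
      "d y a < d l0 a" "d y b < d l0 b"
      using two_leaves_closer_than_lonely_leaf[OF no_deg2 xy(2)] xy(3) 1 by blast
    then show ?thesis
      using 1 by force
  next
    case 2
    obtain a b where "a \<in> leaves - {l0}" "b \<in> leaves - {l0}" "a \<noteq> b"
      "d x a < d l0 a" "d x b < d l0 b"
      using two_leaves_closer_than_lonely_leaf[OF no_deg2 xy(1)] xy(3) 2 by blast
    then show ?thesis
      using 2 by force
  next
    case 3
    obtain a where a: "a \<in> leaves - {l0}" "d x a < d y a"
      using leaf_on_side_avoiding[OF xy 3(1)] .
    obtain b where b: "b \<in> leaves - {l0}" "d y b < d x b"
      using leaf_on_side_avoiding[OF xy(2,1) _ 3(2)] xy(3) by metis
    have "a \<noteq> b \<and> d x a \<noteq> d y a \<and> d x b \<noteq> d y b"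
      using a(2) b(2) by auto
    then show ?thesis
      using a(1) b(1) by blast
  qed
qed

lemma frac_dim_le_lonely_leaf:
  assumes no_deg2: "\<And>l. l \<in> leaves \<Longrightarrow> tdeg E (support l) \<noteq> 2"
  shows "frac_dim V E \<le> (real (card leaves) - 1) / 2"
proof -
  have "frac_dim V E \<le> card (leaves - {l0}) / 2"
    using leaves_subset_V lonely_leaf_complement_resolves[OF no_deg2]
    by (intro frac_dim_le_half_card) auto
  moreover have "card leaves \<ge> 1"
    using card_leaves_ge_3 by simp
  ultimately show ?thesis
    using lonely_leaf(1) finite_leaves by (simp add: of_nat_diff)
qed

end

end

section \<open>Lower bounds for the truncated fractional metric dimension\<close>

locale truncated_resolving = tree_with_major +
  fixes h :: "'a \<Rightarrow> real"
  assumes resolving_h: "resolving_fun1 V E h"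
begin

lemma weight_nonneg: "s \<in> V \<Longrightarrow> 0 \<le> h s"
  using resolving_h unfolding resolving_fun1_def by auto

lemma sum_weight_nonneg: "A \<subseteq> V \<Longrightarrow> 0 \<le> sum h A"
  using weight_nonneg by (meson subsetD sum_nonneg)

lemma sum_weight_mono: "A \<subseteq> B \<Longrightarrow> B \<subseteq> V \<Longrightarrow> sum h A \<le> sum h B"
  using finite_V weight_nonneg by (intro sum_mono2) (auto intro: finite_subset)

lemma sum_weight_union_le:
  assumes "A \<subseteq> V" "B \<subseteq> V"
  shows "sum h (A \<union> B) \<le> sum h A + sum h B"
proof -
  have "finite A" "finite B"
    using assms finite_V finite_subset by auto
  then show ?thesis
    using sum_Un[of A B h] sum_weight_nonneg[of "A \<inter> B"] assms by auto
qed

lemma one_le_sum_weight: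
  assumes "x \<in> V" "y \<in> V" "x \<noteq> y" "resolving_set1 E V x y \<subseteq> Y" "Y \<subseteq> V"
  shows "1 \<le> sum h Y"
proof -
  have "1 \<le> sum h (resolving_set1 E V x y)"
    using resolving_h assms(1-3) unfolding resolving_fun1_def by blast
  also have "\<dots> \<le> sum h Y"
    using assms(4,5) by (rule sum_weight_mono)
  finally show ?thesis .
qed

definition excess :: "'a \<Rightarrow> real" where
  "excess p = h p + sum h (leaves_at p) - card (leaves_at p) / 2"

definition slack :: real where
  "slack = sum excess supports + sum h inner_vertices"

lemma sum_weight_eq_slack: "sum h V = card leaves / 2 + slack"
proof -
  have "V = leaves \<union> supports \<union> inner_vertices"
    unfolding inner_vertices_def using leaves_subset_V supports_subset_V by auto
  moreover have "leaves \<inter> supports = {}" "(leaves \<union> supports) \<inter> inner_vertices = {}"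
    unfolding inner_vertices_def using supports_not_leaves by auto
  moreover have "finite inner_vertices"
    unfolding inner_vertices_def using finite_V by simp
  ultimately have "sum h V = sum h leaves + sum h supports + sum h inner_vertices"
    using finite_leaves finite_supports sum.union_disjoint[of "leaves \<union> supports" inner_vertices h]
      sum.union_disjoint[of leaves supports h] by simp
  moreover have "sum h leaves = (\<Sum>p\<in>supports. sum h (leaves_at p))"
    unfolding leaves_eq_UN_leaves_at
    by (rule sum.UNION_disjoint) (use finite_supports finite_leaves_at disjoint_leaves_at in auto)
  moreover note card_leaves_eq_sum
  ultimately show ?thesis
    unfolding slack_def excess_def
    by (simp add: sum.distrib sum_subtractf sum_divide_distrib)
qed

definition pair_weight :: "'a \<Rightarrow> real" where
  "pair_weight p = h p + Min (h ` leaves_at p)"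

lemma lightest_leaf:
  assumes "p \<in> supports"
  obtains l where "l \<in> leaves_at p" "pair_weight p = h p + h l" "\<forall>l'\<in>leaves_at p. h l \<le> h l'"
proof -
  have "Min (h ` leaves_at p) \<in> h ` leaves_at p"
    using finite_leaves_at leaves_at_nonempty[OF assms] by (intro Min_in) auto
  then obtain l where "l \<in> leaves_at p" "h l = Min (h ` leaves_at p)"
    by auto
  then show ?thesis
    using that finite_leaves_at unfolding pair_weight_def by auto
qed

text \<open>Two leaves with a common support are resolved by themselves only.\<close>

lemma twin_leaves_weight:
  assumes "l \<in> leaves_at p" "l' \<in> leaves_at p" "l \<noteq> l'"
  shows "1 \<le> h l + h l'"
proof -
  have l: "l \<in> leaves" "E l p" "l \<in> V" and l': "l' \<in> leaves" "E l' p" "l' \<in> V"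
    using assms(1,2) support_edge leaves_subset_V unfolding leaves_at_iff by fastforce+
  have "resolving_set1 E V l l' \<subseteq> {l, l'}"
  proof
    fix z assume "z \<in> resolving_set1 E V l l'"
    then have z: "z \<in> V" "tdist1 E l z \<noteq> tdist1 E l' z"
      unfolding resolving_set1_def by auto
    show "z \<in> {l, l'}"
    proof (rule ccontr)
      assume "z \<notin> {l, l'}"
      then have "d z l = d z p + 1" "d z l' = d z p + 1"
        using dist_to_leaf[OF l(1,2) z(1)] dist_to_leaf[OF l'(1,2) z(1)] by auto
      then show False
        using z(2) dist_sym[OF l(3) z(1)] dist_sym[OF l'(3) z(1)] unfolding tdist1_def by simp
    qed
  qed
  then have "1 \<le> sum h {l, l'}"
    using l(3) l'(3) by (intro one_le_sum_weight[OF l(3) l'(3) assms(3)]) auto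
  then show ?thesis
    using assms(3) by simp
qed

lemma sum_other_leaves_ge:
  assumes "l \<in> leaves_at p" "\<forall>l'\<in>leaves_at p. h l \<le> h l'" "A \<subseteq> leaves_at p - {l}"
  shows "card A / 2 \<le> sum h A"
proof -
  have "1/2 \<le> h l'" if "l' \<in> A" for l'
  proof -
    have l': "l' \<in> leaves_at p" "l \<noteq> l'"
      using assms(3) that by auto
    then have "1 \<le> h l + h l'" "h l \<le> h l'"
      using twin_leaves_weight[OF assms(1) l'] assms(2) l'(1) by auto
    then show ?thesis
      by linarith
  qed
  then show ?thesis
    using sum_mono[of A "\<lambda>_. 1/2" h] by simp
qed

lemma excess_ge_pair_weight:
  assumes "p \<in> supports"
  shows "pair_weight p - 1/2 \<le> excess p"
proof -
  obtain l where l: "l \<in> leaves_at p" "pair_weight p = h p + h l" "\<forall>l'\<in>leaves_at p. h l \<le> h l'"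
    by (rule lightest_leaf[OF assms])
  have "card (leaves_at p - {l}) / 2 \<le> sum h (leaves_at p - {l})"
    by (rule sum_other_leaves_ge[OF l(1,3)]) auto
  moreover have "sum h (leaves_at p) = h l + sum h (leaves_at p - {l})"
    by (rule sum.remove[OF finite_leaves_at l(1)])
  moreover have "card (leaves_at p) = Suc (card (leaves_at p - {l}))"
    by (rule card.remove[OF finite_leaves_at l(1)])
  ultimately show ?thesis
    unfolding excess_def l(2) by (simp add: field_simps)
qed

lemma excess_ge_weight:
  assumes "p \<in> supports" "card (leaves_at p) \<ge> 2"
  shows "h p \<le> excess p"
proof -
  obtain l where l: "l \<in> leaves_at p" "pair_weight p = h p + h l"
    "\<forall>l'\<in>leaves_at p. h l \<le> h l'"
    by (rule lightest_leaf[OF assms(1)])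
  let ?others = "leaves_at p - {l}"
  have fin: "finite ?others"
    using finite_leaves_at by simp
  have card_l: "card (leaves_at p) = Suc (card ?others)"
    by (rule card.remove[OF finite_leaves_at l(1)])
  then have "card ?others \<noteq> 0"
    using assms(2) by simp
  then obtain l' where l': "l' \<in> ?others"
    by (metis card.empty ex_in_conv)
  let ?rest = "?others - {l'}"
  have "card ?rest / 2 \<le> sum h ?rest"
    by (rule sum_other_leaves_ge[OF l(1,3)]) auto
  moreover have "1 \<le> h l + h l'"
    using twin_leaves_weight[OF l(1)] l' by auto
  moreover have "sum h (leaves_at p) = h l + (h l' + sum h ?rest)"
    using sum.remove[OF finite_leaves_at l(1), of h] sum.remove[OF fin l', of h] by simp
  moreover have "card (leaves_at p) = Suc (Suc (card ?rest))"
    using card_l card.remove[OF fin l'] by simp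
  ultimately show ?thesis
    unfolding excess_def by (simp add: field_simps)
qed

lemma pair_weights_ge_1:
  assumes "p \<in> supports" "q \<in> supports" "p \<noteq> q"
  shows "1 \<le> pair_weight p + pair_weight q"
proof -
  obtain lp where lp: "lp \<in> leaves_at p" "pair_weight p = h p + h lp" "\<forall>l'\<in>leaves_at p. h lp \<le> h l'"
    by (rule lightest_leaf[OF assms(1)])
  obtain lq where lq: "lq \<in> leaves_at q" "pair_weight q = h q + h lq" "\<forall>l'\<in>leaves_at q. h lq \<le> h l'"
    by (rule lightest_leaf[OF assms(2)])
  have leaves: "lp \<in> leaves" "lq \<in> leaves" and supp: "support lp = p" "support lq = q"
    using lp(1) lq(1) unfolding leaves_at_iff by auto
  then have V: "lp \<in> V" "lq \<in> V" "p \<in> V" "q \<in> V" "lp \<noteq> lq"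
    using assms leaves_subset_V supports_subset_V by auto
  have "neighbours lp = {p}" "neighbours lq = {q}"
    using leaf_neighbours[OF leaves(1) support_edge[OF leaves(1)]]
      leaf_neighbours[OF leaves(2) support_edge[OF leaves(2)]] supp by simp_all
  then have "resolving_set1 E V lp lq \<subseteq> {lp, p} \<union> {lq, q}"
    using resolving_set1_subset[OF V(1,2)] by simp
  then have "1 \<le> sum h ({lp, p} \<union> {lq, q})"
    using V by (intro one_le_sum_weight[OF V(1,2,5)]) auto
  also have "\<dots> \<le> sum h {lp, p} + sum h {lq, q}"
    using V by (intro sum_weight_union_le) auto
  also have "\<dots> \<le> pair_weight p + pair_weight q"
    unfolding lp(2) lq(2) using V weight_nonneg by (simp add: sum.insert_if)
  finally show ?thesis .
qed

lemma lightest_support: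
  assumes "Q \<subseteq> supports" "Q \<noteq> {}"
  obtains ps where "ps \<in> Q" "\<forall>p\<in>Q. pair_weight ps \<le> pair_weight p"
proof -
  have "finite Q"
    using assms(1) finite_supports finite_subset by blast
  then have "Min (pair_weight ` Q) \<in> pair_weight ` Q"
    using assms(2) by (intro Min_in) auto
  then obtain ps where "ps \<in> Q" "pair_weight ps = Min (pair_weight ` Q)"
    by auto
  then show ?thesis
    using that \<open>finite Q\<close> by auto
qed

text \<open>Only the lightest support of \<open>Q\<close> can have negative excess.\<close>

lemma sum_excess_subset_le:
  assumes "Q \<subseteq> supports" "ps \<in> S" "S \<subseteq> Q" "\<forall>p\<in>Q. pair_weight ps \<le> pair_weight p"
  shows "sum excess S \<le> sum excess Q"
proof -
  have "0 \<le> excess p" if p: "p \<in> Q - S" for p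
  proof -
    have "p \<in> supports" "ps \<in> supports" "ps \<noteq> p"
      using p assms(1-3) by auto
    then have "1 \<le> pair_weight ps + pair_weight p" "pair_weight p - 1/2 \<le> excess p"
      using pair_weights_ge_1 excess_ge_pair_weight by blast+
    moreover have "pair_weight ps \<le> pair_weight p"
      using assms(4) p by blast
    ultimately show ?thesis
      by linarith
  qed
  moreover have "finite Q"
    using assms(1) finite_supports finite_subset by blast
  ultimately show ?thesis
    using sum.subset_diff[OF assms(3), of excess] sum_nonneg[of "Q - S" excess] by simp
qed

lemma sum_excess_ge_pair_weight:
  assumes "Q \<subseteq> supports" "Q \<noteq> {}"
  obtains ps where "ps \<in> Q" "pair_weight ps - 1/2 \<le> sum excess Q"
proof -
  obtain ps where ps: "ps \<in> Q" "\<forall>p\<in>Q. pair_weight ps \<le> pair_weight p"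
    using lightest_support[OF assms] .
  have "pair_weight ps - 1/2 \<le> excess ps"
    using excess_ge_pair_weight ps(1) assms(1) by blast
  also have "\<dots> \<le> sum excess Q"
    using sum_excess_subset_le[OF assms(1) _ _ ps(2), of "{ps}"] ps(1) by simp
  finally show ?thesis
    using that ps(1) by blast
qed

lemma sum_excess_nonneg:
  assumes "Q \<subseteq> supports" "card Q \<ge> 2"
  shows "0 \<le> sum excess Q"
proof -
  have "Q \<noteq> {}"
    using assms(2) by auto
  then obtain ps where ps: "ps \<in> Q" "\<forall>p\<in>Q. pair_weight ps \<le> pair_weight p"
    using lightest_support[OF assms(1)] by blast
  have "card (Q - {ps}) \<noteq> 0"
    using assms(2) ps(1) by (simp add: card_Diff_singleton_if)
  then obtain p where p: "p \<in> Q" "p \<noteq> ps"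
    by (metis DiffE card.empty ex_in_conv singletonI)
  have "1 \<le> pair_weight ps + pair_weight p"
    using pair_weights_ge_1 ps(1) p assms(1) by blast
  moreover have "pair_weight ps - 1/2 \<le> excess ps" "pair_weight p - 1/2 \<le> excess p"
    using excess_ge_pair_weight ps(1) p(1) assms(1) by blast+
  moreover have "sum excess {ps, p} \<le> sum excess Q"
    using ps p by (intro sum_excess_subset_le[OF assms(1) _ _ ps(2)]) auto
  ultimately show ?thesis
    using p(2) by simp
qed

lemma slack_nonneg: "card supports \<ge> 2 \<Longrightarrow> 0 \<le> slack"
  unfolding slack_def
  using sum_excess_nonneg[OF order_refl] sum_weight_nonneg[OF inner_vertices_subset_V] by simp

lemma slack_ge_excess:
  assumes "p \<in> supports" "\<forall>q\<in>supports - {p}. 0 \<le> excess q"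
  shows "excess p \<le> slack"
proof -
  have "excess p \<le> sum excess supports"
    using sum.remove[OF finite_supports assms(1), of excess] sum_nonneg[of "supports - {p}" excess] assms(2)
    by simp
  then show ?thesis
    unfolding slack_def using sum_weight_nonneg[OF inner_vertices_subset_V] by simp
qed

lemma slack_ge_one_minus_pair_weight:
  assumes many: "\<forall>p\<in>supports. card (leaves_at p) \<ge> 2"
    and w: "w \<in> inner_vertices" and p0: "p0 \<in> supports"
  shows "1 - pair_weight p0 \<le> slack"
proof -
  obtain ls where ls: "ls \<in> leaves_at p0" "pair_weight p0 = h p0 + h ls"
    using lightest_leaf[OF p0] by metis
  have ls_leaf: "ls \<in> leaves" "neighbours ls = {p0}"
    using ls(1) leaf_neighbours support_edge unfolding leaves_at_iff by auto
  have V: "ls \<in> V" "p0 \<in> V" "w \<in> V" "ls \<noteq> w"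
    using ls_leaf(1) p0 w leaves_subset_V supports_subset_V unfolding inner_vertices_def by auto
  have "resolving_set1 E V ls w \<subseteq> {ls, p0} \<union> (inner_vertices \<union> supports)"
    using resolving_set1_subset[OF V(1,3)] ls_leaf(2) inner_vertex_closed_neighbourhood[OF w] by auto
  then have "1 \<le> sum h ({ls, p0} \<union> (inner_vertices \<union> supports))"
    using V supports_subset_V inner_vertices_subset_V
    by (intro one_le_sum_weight[OF V(1,3,4)]) auto
  also have "\<dots> \<le> sum h {ls, p0} + (sum h inner_vertices + sum h supports)"
    using V supports_subset_V inner_vertices_subset_V
      sum_weight_union_le[of inner_vertices supports]
      sum_weight_union_le[of "{ls, p0}" "inner_vertices \<union> supports"]
    by auto
  also have "sum h {ls, p0} \<le> pair_weight p0"
    unfolding ls(2) using V weight_nonneg by (simp add: sum.insert_if)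
  also have "sum h supports \<le> sum excess supports"
    using excess_ge_weight many by (intro sum_mono) blast
  finally show ?thesis
    unfolding slack_def by simp
qed

lemma slack_ge_quarter:
  assumes many: "\<forall>p\<in>supports. card (leaves_at p) \<ge> 2" and w: "w \<in> inner_vertices"
  shows "1/4 \<le> slack"
proof -
  obtain l where "l \<in> leaves"
    using card_leaves_ge_3 by fastforce
  then have p0: "support l \<in> supports"
    unfolding supports_def by blast
  have "0 \<le> excess p" if "p \<in> supports" for p
    using excess_ge_weight many that weight_nonneg supports_subset_V by (meson order_trans subsetD)
  then have "pair_weight (support l) - 1/2 \<le> slack"
    using excess_ge_pair_weight[OF p0] slack_ge_excess[OF p0] by force
  then show ?thesis
    using slack_ge_one_minus_pair_weight[OF many w p0] by linarith
qed
end

section \<open>A leaf whose support has degree two\<close>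

locale degree_two_support = tree_with_major +
  fixes l1 p1 q
  assumes leaf_l1: "l1 \<in> leaves" and edge_l1_p1: "E l1 p1"
    and neighbours_p1: "neighbours p1 = {l1, q}" and q_ne_l1: "q \<noteq> l1"
begin

lemma support_l1: "support l1 = p1"
  using leaf_edge_iff[OF leaf_l1] edge_l1_p1 by simp

lemma edge_p1_q: "E p1 q"
  using neighbours_p1 unfolding neighbours_def by auto

lemma l1_p1_q_in_V: "l1 \<in> V" "p1 \<in> V" "q \<in> V"
  using edge_in_V edge_l1_p1 edge_p1_q by auto

lemma p1_ne_q: "p1 \<noteq> q"
  using edge_p1_q edge_irrefl by blast

lemma neighbours_l1: "neighbours l1 = {p1}"
  using leaf_neighbours[OF leaf_l1 edge_l1_p1] .

lemma p1_not_leaf: "p1 \<notin> leaves"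
  using support_not_leaf[OF leaf_l1] support_l1 by simp

lemma q_not_leaf: "q \<notin> leaves"
proof
  assume q: "q \<in> leaves"
  have "neighbours q = {p1}"
    using leaf_neighbours[OF q edge_sym[OF edge_p1_q]] .
  then have "E a b \<Longrightarrow> b \<in> {l1, p1, q}" if "a \<in> {l1, p1, q}" for a b
    using that neighbours_l1 neighbours_p1 unfolding neighbours_def by auto
  moreover have "tdeg E a \<le> 2" if "a \<in> {l1, p1, q}" for a
    using that leaf_l1 q neighbours_p1 unfolding leaves_def tdeg_eq_card_neighbours
    by (auto simp: card_insert_if)
  ultimately show False
    using no_closed_set_of_small_degree[of l1 "{l1, p1, q}"] l1_p1_q_in_V by blast
qed

lemma p1_in_supports: "p1 \<in> supports"
  unfolding supports_def using leaf_l1 support_l1 by blast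

lemma leaves_at_p1: "leaves_at p1 = {l1}"
  using neighbours_p1 q_not_leaf leaf_l1 unfolding leaves_at_def neighbours_def by auto

lemma resolving_set1_l1_p1: "resolving_set1 E V l1 p1 \<subseteq> {l1, p1, q}"
  using resolving_set1_subset[OF l1_p1_q_in_V(1,2)] neighbours_l1 neighbours_p1 by auto

lemma supports_other_than_p1:
  obtains p where "p \<in> supports" "p \<noteq> p1"
proof (rule ccontr)
  assume "\<not> thesis"
  then have "supports = {p1}"
    using that p1_in_supports by blast
  then show False
    using card_leaves_eq_sum card_leaves_ge_3 leaves_at_p1 by simp
qed

lemma single_other_support_has_two_leaves:
  assumes "supports - {p1} = {ps}"
  shows "card (leaves_at ps) \<ge> 2"
proof -
  have "supports = {p1, ps}" "ps \<noteq> p1"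
    using assms p1_in_supports by auto
  then show ?thesis
    using card_leaves_eq_sum card_leaves_ge_3 leaves_at_p1 by simp
qed

lemma dist_q_l1: "d q l1 = 2"
  using dist_to_leaf[OF leaf_l1 edge_l1_p1 l1_p1_q_in_V(3) q_ne_l1] dist_edge[OF edge_sym[OF edge_p1_q]] by simp

lemma neighbour_of_q_far_from_l1:
  assumes "E q u" "u \<noteq> p1"
  shows "d u l1 \<ge> 2"
proof -
  have uV: "u \<in> V"
    using edge_in_V[OF assms(1)] by blast
  have "u \<noteq> l1"
    using assms(1) neighbours_l1 p1_ne_q edge_sym[of q u] unfolding neighbours_def by auto
  moreover have "\<not> E u l1"
    using assms(2) neighbours_l1 edge_sym[of u l1] unfolding neighbours_def by auto
  ultimately have "d u l1 \<noteq> 0" "d u l1 \<noteq> 1"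
    using dist_eq_0_iff[OF uV l1_p1_q_in_V(1)] dist_eq_1_iff[OF uV l1_p1_q_in_V(1)] by auto
  then show ?thesis
    by linarith
qed

context
  fixes lq
  assumes q_in_supports: "q \<in> supports" and leaves_at_q: "leaves_at q = {lq}"
begin

lemma lq_leaf: "lq \<in> leaves" "E q lq" "neighbours lq = {q}" "lq \<in> V" "lq \<noteq> p1"
proof -
  show leaf: "lq \<in> leaves" and edge: "E q lq"
    using leaves_at_q unfolding leaves_at_def by auto
  show "neighbours lq = {q}"
    using leaf_neighbours[OF leaf edge_sym[OF edge]] .
  show "lq \<in> V" "lq \<noteq> p1"
    using leaf p1_not_leaf leaves_subset_V by auto
qed

lemma resolving_set1_lq_p1: "resolving_set1 E V lq p1 \<subseteq> {lq, p1, l1}"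
proof -
  have "q \<notin> resolving_set1 E V lq p1"
    using dist_edge[OF edge_sym[OF lq_leaf(2)]] dist_edge[OF edge_p1_q]
    unfolding resolving_set1_def tdist1_def by simp
  then show ?thesis
    using resolving_set1_subset[OF lq_leaf(4) l1_p1_q_in_V(2)] lq_leaf(3) neighbours_p1 by auto
qed

lemma p1_lq_neighbours_q: "{p1, lq} \<subseteq> neighbours q" "card {p1, lq} = 2"
  using edge_sym[OF edge_p1_q] lq_leaf(2,5) unfolding neighbours_def by auto

lemma card_neighbours_q: "card (neighbours q) \<ge> 3"
proof (rule ccontr)
  assume "\<not> card (neighbours q) \<ge> 3"
  then have nq: "neighbours q = {p1, lq}"
    using card_seteq[OF finite_neighbours p1_lq_neighbours_q(1)] p1_lq_neighbours_q(2) by simp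
  then have "E a b \<Longrightarrow> b \<in> {l1, p1, q, lq}" if "a \<in> {l1, p1, q, lq}" for a b
    using that neighbours_l1 neighbours_p1 lq_leaf(3) unfolding neighbours_def by auto
  moreover have "tdeg E a \<le> 2" if "a \<in> {l1, p1, q, lq}" for a
    using that leaf_l1 lq_leaf(1) nq neighbours_p1 unfolding leaves_def tdeg_eq_card_neighbours
    by (auto simp: card_insert_if)
  ultimately show False
    using no_closed_set_of_small_degree[of l1 "{l1, p1, q, lq}"] l1_p1_q_in_V by blast
qed

lemma third_support:
  obtains p where "p \<in> supports" "p \<noteq> p1" "p \<noteq> q"
proof -
  have "card (neighbours q - {p1, lq}) \<noteq> 0"
    using card_neighbours_q card_Diff_subset[OF _ p1_lq_neighbours_q(1)] p1_lq_neighbours_q(2) by simp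
  then obtain u where "u \<in> neighbours q - {p1, lq}"
    by (metis card.empty ex_in_conv)
  then have u: "E q u" "u \<noteq> p1" "u \<noteq> lq"
    unfolding neighbours_def by auto
  have uV: "u \<in> V" and "u \<noteq> q"
    using edge_in_V[OF u(1)] edge_irrefl u(1) by blast+
  obtain z where z: "z \<in> leaves" "d u z < d q z"
    using leaf_on_side[OF uV l1_p1_q_in_V(3) \<open>u \<noteq> q\<close>] .
  have zV: "z \<in> V"
    using z(1) leaves_subset_V by blast
  have "support z \<noteq> q"
  proof
    assume "support z = q"
    then have "z = lq"
      using leaves_at_q z(1) leaves_at_iff by blast
    then have "d u z = 0"
      using z(2) dist_edge[OF lq_leaf(2)] by simp
    then show False
      using dist_eq_0_iff[OF uV zV] u(3) \<open>z = lq\<close> by simp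
  qed
  moreover have "support z \<noteq> p1"
  proof
    assume "support z = p1"
    then have "z = l1"
      using leaves_at_p1 z(1) leaves_at_iff by blast
    then show False
      using z(2) dist_q_l1 neighbour_of_q_far_from_l1[OF u(1,2)] by simp
  qed
  ultimately show ?thesis
    using that z(1) unfolding supports_def by blast
qed

end

end

locale degree_two_support_weights = degree_two_support + truncated_resolving
begin

lemma pair_weight_p1: "pair_weight p1 = h p1 + h l1"
  unfolding pair_weight_def leaves_at_p1 by simp

lemma excess_p1: "excess p1 = pair_weight p1 - 1/2"
  unfolding excess_def pair_weight_p1 leaves_at_p1 by simp

lemma sum_weight_triple_le:
  "a \<in> V \<Longrightarrow> b \<in> V \<Longrightarrow> c \<in> V \<Longrightarrow> sum h {a, b, c} \<le> h a + h b + h c"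
  using weight_nonneg[of a] weight_nonneg[of b] weight_nonneg[of c] by (simp add: sum.insert_if)

lemma pair_weight_p1_plus_weight_q_ge_1: "1 \<le> pair_weight p1 + h q"
proof -
  have "l1 \<noteq> p1"
    using edge_l1_p1 edge_irrefl by blast
  then have "1 \<le> sum h {l1, p1, q}"
    using resolving_set1_l1_p1 l1_p1_q_in_V by (intro one_le_sum_weight[OF l1_p1_q_in_V(1,2)]) auto
  also have "\<dots> \<le> h l1 + h p1 + h q"
    using sum_weight_triple_le l1_p1_q_in_V by blast
  finally show ?thesis
    unfolding pair_weight_p1 by simp
qed

lemma slack_split: "slack = excess p1 + sum excess (supports - {p1}) + sum h inner_vertices"
  unfolding slack_def using sum.remove[OF finite_supports p1_in_supports, of excess] by simp

lemma slack_ge_half_if_q_not_support: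
  assumes "q \<notin> supports"
  shows "1/2 \<le> slack"
proof -
  have "q \<in> inner_vertices"
    using assms l1_p1_q_in_V(3) q_not_leaf unfolding inner_vertices_def by simp
  then have "h q \<le> sum h inner_vertices"
    using sum_weight_mono[OF _ inner_vertices_subset_V, of "{q}"] by simp
  moreover have "0 \<le> sum excess (supports - {p1})"
  proof (cases "card (supports - {p1}) \<ge> 2")
    case True
    then show ?thesis
      using sum_excess_nonneg[of "supports - {p1}"] by simp
  next
    case False
    obtain p where p: "p \<in> supports" "p \<noteq> p1"
      by (rule supports_other_than_p1)
    have "\<forall>a\<in>supports - {p1}. \<forall>b\<in>supports - {p1}. a = b"
      using False finite_supports card_le_Suc0_iff_eq[of "supports - {p1}"] by simp
    then have single: "supports - {p1} = {p}"
      using p by blast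
    moreover have "h p \<le> excess p"
      using excess_ge_weight[OF p(1) single_other_support_has_two_leaves[OF single]] .
    moreover have "0 \<le> h p"
      using weight_nonneg p(1) supports_subset_V by blast
    ultimately show ?thesis
      by simp
  qed
  ultimately show ?thesis
    using slack_split excess_p1 pair_weight_p1_plus_weight_q_ge_1 by linarith
qed

lemma slack_split_q:
  assumes "q \<in> supports"
  shows "slack = excess p1 + excess q + sum excess (supports - {p1} - {q}) + sum h inner_vertices"
proof -
  have "q \<in> supports - {p1}"
    using assms p1_ne_q by blast
  then show ?thesis
    using slack_split sum.remove[of "supports - {p1}" q excess] finite_supports by simp
qed

lemma sum_excess_remaining_supports:
  assumes "q \<in> supports" "supports - {p1} - {q} \<noteq> {}"
  obtains c where "c - 1/2 \<le> sum excess (supports - {p1} - {q})"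
    "1 \<le> pair_weight p1 + c" "1 \<le> pair_weight q + c"
proof -
  have "supports - {p1} - {q} \<subseteq> supports"
    by blast
  then obtain ps where ps: "ps \<in> supports - {p1} - {q}"
    "pair_weight ps - 1/2 \<le> sum excess (supports - {p1} - {q})"
    using sum_excess_ge_pair_weight assms(2) by blast
  then have "ps \<in> supports" "p1 \<noteq> ps" "q \<noteq> ps"
    by auto
  then have "1 \<le> pair_weight p1 + pair_weight ps" "1 \<le> pair_weight q + pair_weight ps"
    using pair_weights_ge_1 p1_in_supports assms(1) by blast+
  then show ?thesis
    using that ps(2) by blast
qed

lemma slack_ge_quarter_if_q_heavy:
  assumes "q \<in> supports" "card (leaves_at q) \<ge> 2"
  shows "1/4 \<le> slack"
proof -
  let ?Q = "supports - {p1} - {q}"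
  have bounds: "h q \<le> excess q" "pair_weight q - 1/2 \<le> excess q" "0 \<le> sum h inner_vertices"
    using excess_ge_weight[OF assms] excess_ge_pair_weight[OF assms(1)]
      sum_weight_nonneg[OF inner_vertices_subset_V] .
  note slack = slack_split_q[OF assms(1)] excess_p1 pair_weight_p1_plus_weight_q_ge_1
  show ?thesis
  proof (cases "?Q = {}")
    case True
    then have "sum excess ?Q = 0"
      by (simp only: sum.empty)
    then show ?thesis
      using bounds slack by linarith
  next
    case False
    then obtain c where "c - 1/2 \<le> sum excess ?Q" "1 \<le> pair_weight p1 + c" "1 \<le> pair_weight q + c"
      by (rule sum_excess_remaining_supports[OF assms(1)])
    then show ?thesis
      using bounds slack by linarith
  qed
qed

lemma pair_weight_p1_plus_weight_lq_ge_1: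
  assumes "q \<in> supports" "leaves_at q = {lq}"
  shows "1 \<le> pair_weight p1 + h lq"
proof -
  note lq = lq_leaf[OF assms]
  have "1 \<le> sum h {lq, p1, l1}"
    using resolving_set1_lq_p1[OF assms] l1_p1_q_in_V lq
    by (intro one_le_sum_weight[OF lq(4) l1_p1_q_in_V(2) lq(5)]) auto
  also have "\<dots> \<le> h lq + h p1 + h l1"
    using sum_weight_triple_le l1_p1_q_in_V lq(4) by blast
  finally show ?thesis
    unfolding pair_weight_p1 by simp
qed

lemma slack_ge_sixth_if_q_lonely:
  assumes "q \<in> supports" "leaves_at q = {lq}"
  shows "1/6 \<le> slack"
proof -
  have "pair_weight q = h q + h lq" "excess q = pair_weight q - 1/2"
    unfolding pair_weight_def excess_def assms(2) by simp_all
  moreover have "0 \<le> sum h inner_vertices"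
    using sum_weight_nonneg[OF inner_vertices_subset_V] .
  moreover obtain p where "p \<in> supports" "p \<noteq> p1" "p \<noteq> q"
    by (rule third_support[OF assms])
  then have "supports - {p1} - {q} \<noteq> {}"
    by blast
  then obtain c where "c - 1/2 \<le> sum excess (supports - {p1} - {q})"
    "1 \<le> pair_weight p1 + c" "1 \<le> pair_weight q + c"
    by (rule sum_excess_remaining_supports[OF assms(1)])
  ultimately show ?thesis
    using slack_split_q[OF assms(1)] excess_p1 pair_weight_p1_plus_weight_q_ge_1
      pair_weight_p1_plus_weight_lq_ge_1[OF assms] by linarith
qed

lemma slack_ge_sixth: "1/6 \<le> slack"
proof (cases "q \<in> supports")
  case True
  show ?thesis
  proof (cases "card (leaves_at q) \<ge> 2")
    case False
    moreover have "card (leaves_at q) \<noteq> 0"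
      using leaves_at_nonempty[OF True] finite_leaves_at by simp
    ultimately have "card (leaves_at q) = 1"
      by linarith
    then obtain lq where "leaves_at q = {lq}"
      by (auto simp: card_1_singleton_iff)
    then show ?thesis
      by (rule slack_ge_sixth_if_q_lonely[OF True])
  next
    case True
    then show ?thesis
      using slack_ge_quarter_if_q_heavy[OF \<open>q \<in> supports\<close>] by linarith
  qed
next
  case False
  then show ?thesis
    using slack_ge_half_if_q_not_support by linarith
qed

end

section \<open>Trees whose two fractional dimensions agree\<close>

context tree_with_major
begin

lemma le_frac_dim1_by_slack:
  assumes "\<And>h. resolving_fun1 V E h \<Longrightarrow> c \<le> truncated_resolving.slack V E h"
  shows "card leaves / 2 + c \<le> frac_dim1 V E"
proof (rule le_frac_dim1)
  fix h assume h: "resolving_fun1 V E h"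
  interpret truncated_resolving V E h
    by unfold_locales (rule h)
  show "card leaves / 2 + c \<le> sum h V"
    using assms[OF h] sum_weight_eq_slack by simp
qed

lemma frac_dim_less_frac_dim1_if_degree_two_support:
  assumes "l \<in> leaves" "tdeg E (support l) = 2"
  shows "frac_dim V E < frac_dim1 V E"
proof -
  have edge: "E l (support l)"
    using support_edge[OF assms(1)] .
  then have "l \<in> neighbours (support l)"
    using edge_sym[OF edge] unfolding neighbours_def by blast
  moreover obtain a b where ab: "neighbours (support l) = {a, b}" "a \<noteq> b"
    using assms(2) unfolding tdeg_eq_card_neighbours by (auto simp: card_2_iff)
  ultimately obtain q where q: "neighbours (support l) = {l, q}" "q \<noteq> l"
    by (cases "l = a") (auto simp: insert_commute)
  interpret degree_two_support V E l "support l" q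
    using assms(1) edge q by unfold_locales
  have "card leaves / 2 + 1/6 \<le> frac_dim1 V E"
  proof (rule le_frac_dim1_by_slack)
    fix h assume "resolving_fun1 V E h"
    then interpret degree_two_support_weights V E l "support l" q h
      by unfold_locales
    show "1/6 \<le> slack"
      by (rule slack_ge_sixth)
  qed
  then show ?thesis
    using frac_dim_le_half_leaves by linarith
qed

lemma frac_dim_less_frac_dim1_if_lonely_leaf:
  assumes "\<And>l. l \<in> leaves \<Longrightarrow> tdeg E (support l) \<noteq> 2"
    and "is_major V E v" "leaves_at v = {l0}"
  shows "frac_dim V E < frac_dim1 V E"
proof -
  have "v \<in> supports"
    using lonely_leaf[OF assms(2,3)] unfolding supports_def by blast
  moreover have "supports \<noteq> {v}"
    using card_leaves_eq_sum card_leaves_ge_3 assms(3) by auto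
  ultimately obtain p where "p \<in> supports" "p \<noteq> v"
    by blast
  then have "card {v, p} \<le> card supports"
    using \<open>v \<in> supports\<close> finite_supports by (intro card_mono) auto
  then have two: "card supports \<ge> 2"
    using \<open>p \<noteq> v\<close> by simp
  have "card leaves / 2 + 0 \<le> frac_dim1 V E"
  proof (rule le_frac_dim1_by_slack)
    fix h assume "resolving_fun1 V E h"
    then interpret truncated_resolving V E h
      by unfold_locales
    show "0 \<le> slack"
      using slack_nonneg[OF two] .
  qed
  moreover have "frac_dim V E \<le> (real (card leaves) - 1) / 2"
    by (rule frac_dim_le_lonely_leaf[OF assms(2,3)]) (rule assms(1))
  ultimately show ?thesis
    by (simp add: diff_divide_distrib)
qed

lemma frac_dim_less_frac_dim1_if_inner_vertex:
  assumes "\<forall>p\<in>supports. card (leaves_at p) \<ge> 2" "w \<in> inner_vertices"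
  shows "frac_dim V E < frac_dim1 V E"
proof -
  have "card leaves / 2 + 1/4 \<le> frac_dim1 V E"
  proof (rule le_frac_dim1_by_slack)
    fix h assume "resolving_fun1 V E h"
    then interpret truncated_resolving V E h
      by unfold_locales
    show "1/4 \<le> slack"
      using slack_ge_quarter[OF assms] .
  qed
  then show ?thesis
    using frac_dim_le_half_leaves by linarith
qed

context
  assumes equal: "frac_dim1 V E = frac_dim V E"
begin

lemma support_major_if_equal_frac_dims:
  assumes "l \<in> leaves"
  shows "is_major V E (support l)"
proof -
  have edge: "E (support l) l"
    using edge_sym[OF support_edge[OF assms]] .
  have "tdeg E (support l) \<noteq> 2"
    using frac_dim_less_frac_dim1_if_degree_two_support[OF assms] equal by auto
  moreover have "support l \<in> V" "support l \<notin> leaves"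
    using edge_in_V[OF edge] support_not_leaf[OF assms] by auto
  moreover have "tdeg E (support l) \<noteq> 0"
    using edge finite_neighbours unfolding tdeg_eq_card_neighbours neighbours_def by auto
  ultimately show ?thesis
    unfolding is_major_def leaves_def by auto
qed

lemma two_leaves_at_supports_if_equal_frac_dims:
  assumes "p \<in> supports"
  shows "card (leaves_at p) \<ge> 2"
proof -
  obtain l where l: "l \<in> leaves" "p = support l"
    using assms unfolding supports_def by blast
  have no_deg2: "tdeg E (support l') \<noteq> 2" if "l' \<in> leaves" for l'
    using support_major_if_equal_frac_dims[OF that] unfolding is_major_def by simp
  have "card (leaves_at p) \<noteq> 1"
  proof
    assume "card (leaves_at p) = 1"
    then obtain l0 where "leaves_at p = {l0}"
      by (auto simp: card_1_singleton_iff)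
    then show False
      using frac_dim_less_frac_dim1_if_lonely_leaf[OF no_deg2 support_major_if_equal_frac_dims[OF l(1)]]
        equal l(2) by simp
  qed
  moreover have "card (leaves_at p) \<noteq> 0"
    using leaves_at_nonempty[OF assms] finite_leaves_at by simp
  ultimately show ?thesis
    by linarith
qed

lemma no_inner_vertices_if_equal_frac_dims: "inner_vertices = {}"
proof -
  have "w \<notin> inner_vertices" for w
    using frac_dim_less_frac_dim1_if_inner_vertex[of w] two_leaves_at_supports_if_equal_frac_dims equal
    by auto
  then show ?thesis
    by blast
qed

end

lemma adjacent_leaf_is_terminal:
  assumes "is_major V E v" "l \<in> leaves_at v"
  shows "is_terminal V E l v"
proof -
  have l: "l \<in> leaves" "support l = v" "l \<in> V"
    using assms(2) leaves_at_iff leaves_subset_V by auto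
  have "d l v = 1"
    using dist_edge[OF support_edge[OF l(1)]] l(2) by simp
  moreover have "d l w \<ge> 2" if w: "is_major V E w" "w \<noteq> v" for w
  proof -
    have "w \<in> V" "w \<noteq> l"
      using w l(1) unfolding is_major_def leaves_def by auto
    moreover have "\<not> E l w"
      using leaf_edge_iff[OF l(1)] l(2) w(2) by blast
    ultimately have "d l w \<noteq> 0" "d l w \<noteq> 1"
      using dist_eq_0_iff[OF l(3)] dist_eq_1_iff[OF l(3)] by auto
    then show ?thesis
      by linarith
  qed
  ultimately have "\<forall>w. is_major V E w \<and> w \<noteq> v \<longrightarrow> d l v < d l w"
    by fastforce
  then show ?thesis
    using assms(1) l(1) unfolding is_terminal_def is_leaf_def leaves_def by blast
qed

lemma card_leaves_at_le_ter:
  assumes "is_major V E v"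
  shows "card (leaves_at v) \<le> ter V E v"
proof -
  have "finite {l. is_terminal V E l v}"
    using finite_V by (rule finite_subset[rotated]) (auto simp: is_terminal_def is_leaf_def)
  then show ?thesis
    unfolding ter_def using adjacent_leaf_is_terminal[OF assms] by (intro card_mono) auto
qed

lemma terminal_adjacent:
  assumes "\<forall>l\<in>leaves. is_major V E (support l)" "is_terminal V E l v"
  shows "E v l"
proof -
  have l: "l \<in> leaves" "is_major V E v" "\<forall>w. is_major V E w \<and> w \<noteq> v \<longrightarrow> d l v < d l w"
    using assms(2) unfolding is_terminal_def is_leaf_def leaves_def by auto
  have "support l = v"
  proof (rule ccontr)
    assume "support l \<noteq> v"
    then have "d l v < d l (support l)"
      using l(3) assms(1) l(1) by blast
    then have "d l v = 0"
      using dist_edge[OF support_edge[OF l(1)]] by simp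
    moreover have "l \<in> V" "v \<in> V" "l \<noteq> v"
      using l(1,2) leaves_subset_V unfolding is_major_def leaves_def by auto
    ultimately show False
      using dist_eq_0_iff by blast
  qed
  then show ?thesis
    using edge_sym[OF support_edge[OF l(1)]] by simp
qed

end

theorem lemma3p15:
  fixes V :: "'a set" and E :: "'a \<Rightarrow> 'a \<Rightarrow> bool"
  assumes "is_tree V E"
    and "ex_num V E \<ge> 1"
    and "frac_dim1 V E = frac_dim V E"
  shows "(\<forall>v\<in>M2 V E. \<forall>l. is_terminal V E l v \<longrightarrow> E v l)
     \<and> \<not> (\<exists>v. is_major V E v \<and> ter V E v = 1)
     \<and> \<not> (\<exists>v. is_major V E v \<and> ter V E v = 0)
     \<and> \<not> (\<exists>u. interior_deg2 V E u)"
proof -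
  have "ext_major V E \<noteq> {}"
    using assms(2) unfolding ex_num_def by auto
  then have "\<exists>v. is_major V E v"
    unfolding ext_major_def by auto
  then interpret tree_with_major V E
    using assms(1) by unfold_locales
  have supports_major: "\<forall>l\<in>leaves. is_major V E (support l)"
    using support_major_if_equal_frac_dims[OF assms(3)] by blast
  have non_leaf_in_supports: "v \<in> supports" if "v \<in> V" "v \<notin> leaves" for v
    using no_inner_vertices_if_equal_frac_dims[OF assms(3)] that unfolding inner_vertices_def by blast
  have "ter V E v \<ge> 2" if "is_major V E v" for v
    using non_leaf_in_supports[of v] that two_leaves_at_supports_if_equal_frac_dims[OF assms(3)]
      card_leaves_at_le_ter[OF that] unfolding is_major_def leaves_def by fastforce
  moreover have "\<not> interior_deg2 V E u" for u
  proof
    assume "interior_deg2 V E u"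
    then have "u \<in> supports" "tdeg E u = 2"
      using non_leaf_in_supports unfolding interior_deg2_def leaves_def by auto
    then show False
      using supports_major unfolding supports_def is_major_def by auto
  qed
  ultimately show ?thesis
    using terminal_adjacent[OF supports_major] by fastforce
qed

end
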